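(* Let $\sigma$ be a substitution on the alphabet $\mathcal A=\{1,\dots,m\}$ whose structure matrix $M$ has a real eigenvalue $\beta>1$ with a right eigenvector $\vec h=(h_1,\dots,h_m)$ having strictly positive entries. Suppose there is $r>0$ such that $\vec h\in (r\mathbb{Q}(\beta))^m$. Then the map $F:E\to E$ associated to the tiling substitution $S$ (defined below) is an algebraic generalized $\beta$-transformation.
   Context: A substitution is a map $\sigma:\mathcal A\to\mathcal A^*$, where $\mathcal A^*$ is the set of nonempty finite words over $\mathcal A$. The structure matrix $M$ is the $m\times m$ matrix with $M_{i,j}$ equal to the number of occurrences of $j$ in $\sigma(i)$; $M\vec h=\beta\vec h$. Prototiles are the labeled intervals $P_j=[0,h_j)$ (label $j$); a tile is a translate $P_j+s=[s,s+h_j)$ carrying label $j$. For a word $\mathbf w=j_1\cdots j_n$ and $s\in\mathbb R$, the patch $\pi(s,\mathbf w)$ is $(P_{j_1}+s_1,\dots,P_{j_n}+s_n)$ with $s_1=s$, $s_{i+1}=s_i+h_{j_i}$. The tiling substitution is $S(P_j+s)=\pi(\beta s,\sigma(j))$. A central tile is a tile $[s,t)$ with $s\le 0<t$; for a central tile $T$, $\bar S(T)$ denotes the unique tile of $S(T)$ containing $0$ (it is again central). Let $g_0=0$, $g_j=g_{j-1}+h_j$, $E_j=P_j+g_{j-1}=[g_{j-1},g_j)$ (label $j$), $B=g_m$, $E=[0,B)$. Define $F:E\to E$ by: for $x\in E_j$, $E_j-x$ is a central tile, and $\bar S(E_j-x)=E_k-y$ for a unique $k\in\mathcal A$ and $y\in\mathbb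 R$ (with $y\in E_k$); set $F(x)=y$. A generalized $\beta$-transformation on $E=[0,B)$ is a map $F:E\to E$ for which there exist $0=x_0<x_1<\dots<x_l=B$ and reals $y_1,\dots,y_l$ such that, with $I_j=[x_{j-1},x_j)$, $\beta I_j-y_j\subseteq E$ and $F(x)=\beta x-y_j$ for $x\in I_j$ (equivalently: piecewise linear, right-continuous, with derivative $\beta$ almost everywhere). It is algebraic if $\beta$ is an algebraic number and there is $r\in\mathbb R$ with $x_0,\dots,x_l,y_1,\dots,y_l\in r\mathbb{Q}(\beta)$. *)

theory Defs
  imports Complex_Main "HOL-Computational_Algebra.Polynomial"
begin

definition is_substitution :: "nat \<Rightarrow> (nat \<Rightarrow> nat list) \<Rightarrow> bool" where
  "is_substitution m \<sigma> \<longleftrightarrow> m \<ge> 1 \<and> (\<forall>j\<in>{1..m}. \<sigma> j \<noteq> [] \<and> set (\<sigma> j) \<subseteq> {1..m})"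

definition struct_matrix :: "(nat \<Rightarrow> nat list) \<Rightarrow> nat \<Rightarrow> nat \<Rightarrow> nat" where
  "struct_matrix \<sigma> i j = count_list (\<sigma> i) j"

definition Qadj :: "real \<Rightarrow> real set" where
  "Qadj \<beta> = {poly p \<beta> / poly q \<beta> | p q. (\<forall>i. coeff p i \<in> \<rat>) \<and> (\<forall>i. coeff q i \<in> \<rat>) \<and> poly q \<beta> \<noteq> 0}"

definition rQadj :: "real \<Rightarrow> real \<Rightarrow> real set" where
  "rQadj r \<beta> = {r * q | q. q \<in> Qadj \<beta>}"

text \<open>A tile is a pair (label, left endpoint); tile (j, s) is the interval [s, s + h j) labelled j.\<close>
type_synonym tile = "nat \<times> real"

definition tile_set :: "(nat \<Rightarrow> real) \<Rightarrow> tile \<Rightarrow> real set" where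
  "tile_set h T = {snd T ..< snd T + h (fst T)}"

definition patch :: "(nat \<Rightarrow> real) \<Rightarrow> real \<Rightarrow> nat list \<Rightarrow> tile list" where
  "patch h s w = map (\<lambda>i. (w ! i, s + sum_list (map h (take i w)))) [0..<length w]"

definition tiling_subst :: "(nat \<Rightarrow> nat list) \<Rightarrow> (nat \<Rightarrow> real) \<Rightarrow> real \<Rightarrow> tile \<Rightarrow> tile list" where
  "tiling_subst \<sigma> h \<beta> T = patch h (\<beta> * snd T) (\<sigma> (fst T))"

definition central :: "(nat \<Rightarrow> real) \<Rightarrow> tile \<Rightarrow> bool" where
  "central h T \<longleftrightarrow> snd T \<le> 0 \<and> 0 < snd T + h (fst T)"

definition barS :: "(nat \<Rightarrow> nat list) \<Rightarrow> (nat \<Rightarrow> real) \<Rightarrow> real \<Rightarrow> tile \<Rightarrow> tile" where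
  "barS \<sigma> h \<beta> T = (THE T'. T' \<in> set (tiling_subst \<sigma> h \<beta> T) \<and> (0::real) \<in> tile_set h T')"

definition gpt :: "(nat \<Rightarrow> real) \<Rightarrow> nat \<Rightarrow> real" where
  "gpt h j = (\<Sum>i=1..j. h i)"

definition Eint :: "(nat \<Rightarrow> real) \<Rightarrow> nat \<Rightarrow> real set" where
  "Eint h j = {gpt h (j - 1) ..< gpt h j}"

text \<open>The map F : E -> E. For x in E_j, E_j - x is the tile (j, g_{j-1} - x);
F x = y where bar S(E_j - x) = E_k - y = (k, g_{k-1} - y).\<close>
definition Fmap :: "nat \<Rightarrow> (nat \<Rightarrow> nat list) \<Rightarrow> (nat \<Rightarrow> real) \<Rightarrow> real \<Rightarrow> real \<Rightarrow> real" where
  "Fmap m \<sigma> h \<beta> x =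
     (let j = (THE j. j \<in> {1..m} \<and> x \<in> Eint h j);
          T' = barS \<sigma> h \<beta> (j, gpt h (j - 1) - x)
      in THE y. \<exists>k\<in>{1..m}. T' = (k, gpt h (k - 1) - y))"

definition gen_beta_transf_pts ::
  "real \<Rightarrow> real \<Rightarrow> (real \<Rightarrow> real) \<Rightarrow> nat \<Rightarrow> (nat \<Rightarrow> real) \<Rightarrow> (nat \<Rightarrow> real) \<Rightarrow> bool" where
  "gen_beta_transf_pts \<beta> B F l xs ys \<longleftrightarrow>
     l \<ge> 1 \<and> xs 0 = 0 \<and> xs l = B \<and> (\<forall>i<l. xs i < xs (Suc i)) \<and>
     (\<forall>j\<in>{1..l}. (\<lambda>t. \<beta> * t - ys j) ` {xs (j - 1) ..< xs j} \<subseteq> {0..<B} \<and>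
                  (\<forall>t\<in>{xs (j - 1) ..< xs j}. F t = \<beta> * t - ys j))"

definition gen_beta_transf :: "real \<Rightarrow> real \<Rightarrow> (real \<Rightarrow> real) \<Rightarrow> bool" where
  "gen_beta_transf \<beta> B F \<longleftrightarrow> (\<exists>l xs ys. gen_beta_transf_pts \<beta> B F l xs ys)"

definition algebraic_gen_beta_transf :: "real \<Rightarrow> real \<Rightarrow> (real \<Rightarrow> real) \<Rightarrow> bool" where
  "algebraic_gen_beta_transf \<beta> B F \<longleftrightarrow> algebraic \<beta> \<and>
     (\<exists>l xs ys r. gen_beta_transf_pts \<beta> B F l xs ys \<and>
        (\<forall>i\<in>{0..l}. xs i \<in> rQadj r \<beta>) \<and> (\<forall>j\<in>{1..l}. ys j \<in> rQadj r \<beta>))"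

end

theory Submission
  imports Defs "Jordan_Normal_Form.Char_Poly"
begin

(* beta is an eigenvalue of the integer matrix M, hence a root of its monic integer
   characteristic polynomial, so it is algebraic.

   For x in E_j, the inflated tile beta (E_j - x) is the patch of sigma(j) starting at
   beta (g_{j-1} - x). Its i-th tile covers 0 exactly when x lies in
   [g_{j-1} + c_i / beta, g_{j-1} + c_{i+1} / beta), where c_i is the total length of the
   first i letters of sigma(j); on that interval F x = beta x - (beta g_{j-1} + c_i - g_{k-1})
   with k the i-th letter. The eigenvector equation says that c_{|sigma(j)|} = beta h_j, so
   these intervals partition E_j. All breakpoints and offsets are obtained from the h_i by
   sums and by multiplication or division by beta, so they stay in r Q(beta). *)

section \<open>Eigenvalues of integer matrices\<close>

lemma algebraic_eigenvalue_int_matrix: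
  fixes M :: "nat \<Rightarrow> nat \<Rightarrow> int" and v :: "nat \<Rightarrow> real"
  assumes nonzero: "\<exists>i\<in>{1..m}. v i \<noteq> 0"
    and eigen: "\<forall>i\<in>{1..m}. (\<Sum>j=1..m. of_int (M i j) * v j) = \<beta> * v i"
  shows "algebraic \<beta>"
proof -
  define A :: "int mat" where "A = mat m m (\<lambda>(i, j). M (Suc i) (Suc j))"
  have A: "A \<in> carrier_mat m m" unfolding A_def by simp
  define Ar where "Ar = map_mat real_of_int A"
  have Ar: "Ar \<in> carrier_mat m m" using A unfolding Ar_def by simp
  define u where "u = vec m (\<lambda>i. v (Suc i))"
  have u: "u \<in> carrier_vec m" unfolding u_def by simp
  have u0: "u \<noteq> 0\<^sub>v m"
  proof
    assume "u = 0\<^sub>v m"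
    moreover obtain i where i: "i \<in> {1..m}" "v i \<noteq> 0" using nonzero by blast
    moreover have "u $ (i - 1) = v i" using i unfolding u_def by auto
    ultimately show False using i by auto
  qed
  have Au: "Ar *\<^sub>v u = \<beta> \<cdot>\<^sub>v u"
  proof (rule eq_vecI)
    fix i assume "i < dim_vec (\<beta> \<cdot>\<^sub>v u)"
    then have i: "i < m" unfolding u_def by simp
    have "(Ar *\<^sub>v u) $ i = (\<Sum>j<m. of_int (M (Suc i) (Suc j)) * v (Suc j))"
      using i unfolding Ar_def A_def u_def
      by (simp add: mult_mat_vec_def scalar_prod_def row_def atLeast0LessThan)
    also have "\<dots> = (\<Sum>j=1..m. of_int (M (Suc i) j) * v j)"
      by (rule sum.reindex_bij_witness[of _ "\<lambda>j. j - 1" Suc]) auto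
    also have "\<dots> = \<beta> * v (Suc i)" using eigen i by auto
    finally show "(Ar *\<^sub>v u) $ i = (\<beta> \<cdot>\<^sub>v u) $ i" using i unfolding u_def by simp
  qed (simp add: Ar_def A_def u_def)
  have "eigenvalue Ar \<beta>"
    unfolding eigenvalue_def eigenvector_def using Ar u u0 Au by auto
  then have "poly (char_poly Ar) \<beta> = 0" using eigenvalue_root_char_poly[OF Ar] by simp
  moreover have "char_poly Ar = map_poly real_of_int (char_poly A)"
    unfolding Ar_def by (rule of_int_hom.char_poly_hom[OF A])
  moreover have "char_poly A \<noteq> 0" using degree_monic_char_poly[OF A] by auto
  ultimately show ?thesis
    by (intro algebraicI[of "map_poly real_of_int (char_poly A)"]) (auto simp: coeff_map_poly)
qed

section \<open>The field Q(\<beta>)\<close>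

definition rational_coeffs :: "real poly \<Rightarrow> bool" where
  "rational_coeffs p \<longleftrightarrow> (\<forall>i. coeff p i \<in> \<rat>)"

lemma rational_coeffs_add: "rational_coeffs p \<Longrightarrow> rational_coeffs q \<Longrightarrow> rational_coeffs (p + q)"
  unfolding rational_coeffs_def by simp

lemma rational_coeffs_mult: "rational_coeffs p \<Longrightarrow> rational_coeffs q \<Longrightarrow> rational_coeffs (p * q)"
  unfolding rational_coeffs_def coeff_mult by (auto intro!: Rats_sum Rats_mult)

lemma rational_coeffs_const: "c \<in> \<rat> \<Longrightarrow> rational_coeffs [:c:]"
  unfolding rational_coeffs_def by (auto simp: coeff_pCons split: nat.splits)

lemma rational_coeffs_X: "rational_coeffs [:0, 1:]"
  unfolding rational_coeffs_def by (auto simp: coeff_pCons split: nat.splits)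

lemma mem_Qadj_iff:
  "x \<in> Qadj b \<longleftrightarrow>
     (\<exists>p q. rational_coeffs p \<and> rational_coeffs q \<and> poly q b \<noteq> 0 \<and> x = poly p b / poly q b)"
  unfolding Qadj_def rational_coeffs_def by blast

lemma Rats_in_Qadj: "c \<in> \<rat> \<Longrightarrow> c \<in> Qadj b"
  unfolding mem_Qadj_iff
  by (rule exI[of _ "[:c:]"], rule exI[of _ "[:1:]"]) (auto intro: rational_coeffs_const)

lemma self_in_Qadj: "b \<in> Qadj b"
  unfolding mem_Qadj_iff
  by (rule exI[of _ "[:0, 1:]"], rule exI[of _ "[:1:]"]) (auto intro: rational_coeffs_X rational_coeffs_const)

lemma inverse_self_in_Qadj: "b \<noteq> 0 \<Longrightarrow> 1 / b \<in> Qadj b"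
  unfolding mem_Qadj_iff
  by (rule exI[of _ "[:1:]"], rule exI[of _ "[:0, 1:]"]) (auto intro: rational_coeffs_X rational_coeffs_const)

lemma Qadj_add:
  assumes "x \<in> Qadj b" "y \<in> Qadj b"
  shows "x + y \<in> Qadj b"
proof -
  obtain p1 q1 p2 q2 where *: "rational_coeffs p1" "rational_coeffs q1" "poly q1 b \<noteq> 0"
      "x = poly p1 b / poly q1 b" "rational_coeffs p2" "rational_coeffs q2" "poly q2 b \<noteq> 0"
      "y = poly p2 b / poly q2 b"
    using assms unfolding mem_Qadj_iff by blast
  show ?thesis unfolding mem_Qadj_iff
    by (rule exI[of _ "p1 * q2 + p2 * q1"], rule exI[of _ "q1 * q2"])
       (use * in \<open>auto intro!: rational_coeffs_add rational_coeffs_mult simp: add_frac_eq\<close>)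
qed

lemma Qadj_mult:
  assumes "x \<in> Qadj b" "y \<in> Qadj b"
  shows "x * y \<in> Qadj b"
proof -
  obtain p1 q1 p2 q2 where *: "rational_coeffs p1" "rational_coeffs q1" "poly q1 b \<noteq> 0"
      "x = poly p1 b / poly q1 b" "rational_coeffs p2" "rational_coeffs q2" "poly q2 b \<noteq> 0"
      "y = poly p2 b / poly q2 b"
    using assms unfolding mem_Qadj_iff by blast
  show ?thesis unfolding mem_Qadj_iff
    by (rule exI[of _ "p1 * p2"], rule exI[of _ "q1 * q2"])
       (use * in \<open>auto intro!: rational_coeffs_mult\<close>)
qed

lemma Qadj_uminus: "x \<in> Qadj b \<Longrightarrow> - x \<in> Qadj b"
  using Qadj_mult[OF Rats_in_Qadj[of "-1"]] by simp

lemma mem_rQadj_iff: "x \<in> rQadj r b \<longleftrightarrow> (\<exists>q\<in>Qadj b. x = r * q)"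
  unfolding rQadj_def by blast

lemma zero_in_rQadj: "0 \<in> rQadj r b"
  unfolding mem_rQadj_iff using Rats_in_Qadj[of 0] by force

lemma rQadj_add: "x \<in> rQadj r b \<Longrightarrow> y \<in> rQadj r b \<Longrightarrow> x + y \<in> rQadj r b"
  unfolding mem_rQadj_iff by (metis Qadj_add distrib_left)

lemma rQadj_diff: "x \<in> rQadj r b \<Longrightarrow> y \<in> rQadj r b \<Longrightarrow> x - y \<in> rQadj r b"
  unfolding mem_rQadj_iff by (metis Qadj_add Qadj_uminus right_diff_distrib diff_conv_add_uminus)

lemma rQadj_mult_self: "x \<in> rQadj r b \<Longrightarrow> b * x \<in> rQadj r b"
  unfolding mem_rQadj_iff by (metis Qadj_mult self_in_Qadj mult.left_commute)

lemma rQadj_divide_self: "b \<noteq> 0 \<Longrightarrow> x \<in> rQadj r b \<Longrightarrow> x / b \<in> rQadj r b"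
  unfolding mem_rQadj_iff
  by (metis Qadj_mult inverse_self_in_Qadj times_divide_eq_right mult.right_neutral)

lemma rQadj_sum: "finite A \<Longrightarrow> (\<And>i. i \<in> A \<Longrightarrow> f i \<in> rQadj r b) \<Longrightarrow> sum f A \<in> rQadj r b"
  by (induction A rule: finite_induct) (auto intro: zero_in_rQadj rQadj_add)

lemma rQadj_sum_list: "(\<And>i. i \<in> set w \<Longrightarrow> f i \<in> rQadj r b) \<Longrightarrow> sum_list (map f w) \<in> rQadj r b"
  by (induction w) (auto intro: zero_in_rQadj rQadj_add)

section \<open>Generalized \<beta>-transformations from chains of affine branches\<close>

definition affine_branch :: "real \<Rightarrow> real \<Rightarrow> (real \<Rightarrow> real) \<Rightarrow> real \<Rightarrow> real \<Rightarrow> real \<Rightarrow> bool" where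
  "affine_branch \<beta> B F u v y \<longleftrightarrow> (\<forall>t\<in>{u..<v}. F t = \<beta> * t - y \<and> \<beta> * t - y \<in> {0..<B})"

text \<open>A triple (u, v, y) encodes the branch t \<mapsto> \<beta> t - y of F on [u, v).\<close>

fun branch_chain ::
  "real \<Rightarrow> real \<Rightarrow> (real \<Rightarrow> real) \<Rightarrow> real \<Rightarrow> real \<Rightarrow> (real \<times> real \<times> real) list \<Rightarrow> bool" where
  "branch_chain \<beta> B F a b [] \<longleftrightarrow> a = b"
| "branch_chain \<beta> B F a b ((u, v, y) # L) \<longleftrightarrow>
     u = a \<and> u < v \<and> affine_branch \<beta> B F u v y \<and> branch_chain \<beta> B F v b L"

lemma branch_chain_append:
  "branch_chain \<beta> B F a b L1 \<Longrightarrow> branch_chain \<beta> B F b c L2 \<Longrightarrow> branch_chain \<beta> B F a c (L1 @ L2)"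
  by (induction L1 arbitrary: a) auto

lemma branch_chain_concat:
  assumes "a \<le> b" "\<And>j. a \<le> j \<Longrightarrow> j < b \<Longrightarrow> branch_chain \<beta> B F (q j) (q (Suc j)) (L j)"
  shows "branch_chain \<beta> B F (q a) (q b) (concat (map L [a..<b]))"
  using assms(1)
proof (induction b rule: dec_induct)
  case (step n)
  then show ?case using assms(2) by (auto intro: branch_chain_append)
qed simp

lemma branch_chain_nth:
  assumes "branch_chain \<beta> B F a b L" "i < length L"
  shows "fst (L ! i) < fst (snd (L ! i)) \<and>
    affine_branch \<beta> B F (fst (L ! i)) (fst (snd (L ! i))) (snd (snd (L ! i))) \<and>
    fst (snd (L ! i)) = (if Suc i < length L then fst (L ! Suc i) else b)"
  using assms
proof (induction L arbitrary: a i)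
  case (Cons x L)
  obtain u v y where x: "x = (u, v, y)" by (cases x)
  show ?case
  proof (cases i)
    case 0
    then show ?thesis using Cons.prems x by (cases L) auto
  next
    case (Suc i')
    then show ?thesis using Cons.prems Cons.IH[of v i'] x by auto
  qed
qed simp

lemma gen_beta_transf_pts_of_branch_chain:
  assumes chain: "branch_chain \<beta> B F 0 B L" and "L \<noteq> []"
  shows "gen_beta_transf_pts \<beta> B F (length L) (\<lambda>i. if i < length L then fst (L ! i) else B)
           (\<lambda>j. snd (snd (L ! (j - 1))))"
proof -
  let ?xs = "\<lambda>i. if i < length L then fst (L ! i) else B"
  have next_point: "?xs (Suc i) = fst (snd (L ! i))" if "i < length L" for i
    using branch_chain_nth[OF chain that] by auto
  have branch: "affine_branch \<beta> B F (?xs (j - 1)) (?xs j) (snd (snd (L ! (j - 1))))"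
    if "j \<in> {1..length L}" for j
    using branch_chain_nth[OF chain, of "j - 1"] next_point[of "j - 1"] that by auto
  show ?thesis
    unfolding gen_beta_transf_pts_def
  proof (intro conjI allI impI ballI)
    show "1 \<le> length L" using \<open>L \<noteq> []\<close> by (cases L) auto
    show "?xs 0 = 0" using chain \<open>L \<noteq> []\<close> by (cases L) auto
    show "?xs (length L) = B" by simp
    show "?xs i < ?xs (Suc i)" if "i < length L" for i
      using branch_chain_nth[OF chain that] next_point[OF that] that by simp
  next
    fix j assume "j \<in> {1..length L}"
    then show "(\<lambda>t. \<beta> * t - snd (snd (L ! (j - 1)))) ` {?xs (j - 1)..<?xs j} \<subseteq> {0..<B}"
      and "\<And>t. t \<in> {?xs (j - 1)..<?xs j} \<Longrightarrow> F t = \<beta> * t - snd (snd (L ! (j - 1)))"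
      using branch unfolding affine_branch_def by auto
  qed
qed

section \<open>The map F of a substitution tiling\<close>

lemma sum_list_map_eq_sum_of_nat_count:
  fixes f :: "'a \<Rightarrow> 'b::semiring_1"
  assumes "set xs \<subseteq> X" "finite X"
  shows "sum_list (map f xs) = (\<Sum>x\<in>X. of_nat (count_list xs x) * f x)"
  using assms(1)
proof (induction xs)
  case (Cons a xs)
  have "(\<Sum>x\<in>X. of_nat (count_list (a # xs) x) * f x)
      = (\<Sum>x\<in>X. (if a = x then f x else 0)) + (\<Sum>x\<in>X. of_nat (count_list xs x) * f x)"
    by (auto simp: sum.distrib[symmetric] distrib_right intro!: sum.cong)
  then show ?case using Cons assms(2) by simp
qed simp

lemma sum_list_take_mono:
  fixes h :: "'a \<Rightarrow> 'b::ordered_comm_monoid_add"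
  assumes "\<forall>k\<in>set w. h k \<ge> 0" "i \<le> i'"
  shows "sum_list (map h (take i w)) \<le> sum_list (map h (take i' w))"
proof -
  have "take i' w = take i w @ take (i' - i) (drop i w)"
    using take_add[of i "i' - i" w] assms(2) by simp
  moreover have "0 \<le> sum_list (map h (take (i' - i) (drop i w)))"
    using assms(1) by (intro sum_list_nonneg) (auto dest: in_set_takeD in_set_dropD)
  ultimately show ?thesis by (simp add: add_increasing2)
qed

lemma the_patch_tile_containing:
  assumes pos: "\<forall>k\<in>set w. h k > 0" and i: "i < length w"
    and lower: "s + sum_list (map h (take i w)) \<le> x"
    and upper: "x < s + sum_list (map h (take (Suc i) w))"
  shows "(THE T. T \<in> set (patch h s w) \<and> x \<in> tile_set h T) = (w ! i, s + sum_list (map h (take i w)))"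
proof -
  let ?c = "\<lambda>i. sum_list (map h (take i w))"
  have c_Suc: "?c (Suc i') = ?c i' + h (w ! i')" if "i' < length w" for i'
    using that by (simp add: take_Suc_conv_app_nth)
  have c_mono: "?c i' \<le> ?c i''" if "i' \<le> i''" for i' i''
    using pos that by (intro sum_list_take_mono) (auto simp: less_imp_le)
  show ?thesis
  proof (rule the_equality)
    show "(w ! i, s + ?c i) \<in> set (patch h s w) \<and> x \<in> tile_set h (w ! i, s + ?c i)"
      using i lower upper c_Suc[OF i] unfolding patch_def tile_set_def by auto
  next
    fix T assume T: "T \<in> set (patch h s w) \<and> x \<in> tile_set h T"
    then obtain i' where i': "i' < length w" "T = (w ! i', s + ?c i')"
      unfolding patch_def by auto
    then have "s + ?c i' \<le> x" "x < s + ?c (Suc i')"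
      using T c_Suc[OF i'(1)] unfolding tile_set_def by auto
    then have "i' = i"
      using c_mono[of "Suc i'" i] c_mono[of "Suc i" i'] lower upper
      by (cases i' i rule: linorder_cases) auto
    then show "T = (w ! i, s + ?c i)" using i' by simp
  qed
qed

lemma gpt_diff: "0 < j \<Longrightarrow> gpt h j = gpt h (j - 1) + h j"
  unfolding gpt_def by (cases j) auto

locale substitution_tiling =
  fixes m :: nat and \<sigma> :: "nat \<Rightarrow> nat list" and \<beta> :: real and h :: "nat \<Rightarrow> real"
  assumes subst: "is_substitution m \<sigma>"
    and beta_gt: "\<beta> > 1"
    and h_pos: "\<forall>i\<in>{1..m}. h i > 0"
    and eigen: "\<forall>i\<in>{1..m}. (\<Sum>j=1..m. real (struct_matrix \<sigma> i j) * h j) = \<beta> * h i"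
begin

lemma beta_algebraic: "algebraic \<beta>"
proof (rule algebraic_eigenvalue_int_matrix)
  show "\<exists>i\<in>{1..m}. h i \<noteq> 0" using subst h_pos unfolding is_substitution_def by force
  show "\<forall>i\<in>{1..m}. (\<Sum>j=1..m. of_int (int (struct_matrix \<sigma> i j)) * h j) = \<beta> * h i"
    using eigen by simp
qed

lemma h_nonneg: "i \<in> {1..m} \<Longrightarrow> 0 \<le> h i"
  using h_pos by force

lemma gpt_mono:
  assumes "j \<le> k" "k \<le> m"
  shows "gpt h j \<le> gpt h k"
  unfolding gpt_def
proof (rule sum_mono2)
  show "0 \<le> h i" if "i \<in> {1..k} - {1..j}" for i
    using that assms by (intro h_nonneg) auto
qed (use assms in auto)

lemma gpt_nonneg: "j \<le> m \<Longrightarrow> 0 \<le> gpt h j"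
  using gpt_mono[of 0 j] by (simp add: gpt_def)

lemma the_Eint_index:
  assumes j: "j \<in> {1..m}" and t: "t \<in> Eint h j"
  shows "(THE j'. j' \<in> {1..m} \<and> t \<in> Eint h j') = j"
proof (rule the_equality)
  fix j' assume j': "j' \<in> {1..m} \<and> t \<in> Eint h j'"
  have False if "j < j'"
  proof -
    have "gpt h j \<le> gpt h (j' - 1)" using that j' by (intro gpt_mono) auto
    then show False using j' t unfolding Eint_def by auto
  qed
  moreover have False if "j' < j"
  proof -
    have "gpt h j' \<le> gpt h (j - 1)" using that j by (intro gpt_mono) auto
    then show False using j' t unfolding Eint_def by auto
  qed
  ultimately show "j' = j" by (cases j j' rule: linorder_cases) auto
qed (use assms in simp)

lemma letter_in_alphabet: "j \<in> {1..m} \<Longrightarrow> k \<in> set (\<sigma> j) \<Longrightarrow> k \<in> {1..m}"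
  using subst unfolding is_substitution_def by blast

lemma letter_pos: "j \<in> {1..m} \<Longrightarrow> \<forall>k\<in>set (\<sigma> j). h k > 0"
  using letter_in_alphabet h_pos by blast

definition prefix_length :: "nat \<Rightarrow> nat \<Rightarrow> real" where
  "prefix_length j i = sum_list (map h (take i (\<sigma> j)))"

lemma prefix_length_Suc:
  "i < length (\<sigma> j) \<Longrightarrow> prefix_length j (Suc i) = prefix_length j i + h (\<sigma> j ! i)"
  unfolding prefix_length_def by (simp add: take_Suc_conv_app_nth)

lemma prefix_length_mono: "j \<in> {1..m} \<Longrightarrow> i \<le> i' \<Longrightarrow> prefix_length j i \<le> prefix_length j i'"
  unfolding prefix_length_def using letter_pos by (intro sum_list_take_mono) (auto simp: less_imp_le)

lemma prefix_length_full:
  assumes j: "j \<in> {1..m}"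
  shows "prefix_length j (length (\<sigma> j)) = \<beta> * h j"
proof -
  have "set (\<sigma> j) \<subseteq> {1..m}" using letter_in_alphabet[OF j] by blast
  then have "prefix_length j (length (\<sigma> j)) = (\<Sum>k=1..m. real (struct_matrix \<sigma> j k) * h k)"
    unfolding prefix_length_def struct_matrix_def by (simp add: sum_list_map_eq_sum_of_nat_count)
  also have "\<dots> = \<beta> * h j" using eigen j by blast
  finally show ?thesis .
qed

lemma Fmap_eq:
  assumes "j \<in> {1..m}" "t \<in> Eint h j" "k \<in> {1..m}"
    and "barS \<sigma> h \<beta> (j, gpt h (j - 1) - t) = (k, u)"
  shows "Fmap m \<sigma> h \<beta> t = gpt h (k - 1) - u"
  unfolding Fmap_def Let_def the_Eint_index[OF assms(1,2)] assms(4)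
  by (rule the_equality) (use assms(3) in auto)

definition breakpoint :: "nat \<Rightarrow> nat \<Rightarrow> real" where
  "breakpoint j i = gpt h (j - 1) + prefix_length j i / \<beta>"

definition branch_offset :: "nat \<Rightarrow> nat \<Rightarrow> real" where
  "branch_offset j i = \<beta> * gpt h (j - 1) + prefix_length j i - gpt h (\<sigma> j ! i - 1)"

lemma breakpoint_0: "breakpoint j 0 = gpt h (j - 1)"
  unfolding breakpoint_def prefix_length_def by simp

lemma breakpoint_full: "j \<in> {1..m} \<Longrightarrow> breakpoint j (length (\<sigma> j)) = gpt h j"
  unfolding breakpoint_def using prefix_length_full beta_gt gpt_diff[of j h] by simp

lemma breakpoint_less:
  assumes "j \<in> {1..m}" "i < length (\<sigma> j)"
  shows "breakpoint j i < breakpoint j (Suc i)"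
proof -
  have "h (\<sigma> j ! i) > 0" using letter_pos[OF assms(1)] assms(2) by simp
  then show ?thesis
    unfolding breakpoint_def prefix_length_Suc[OF assms(2)] using beta_gt by (simp add: add_divide_distrib)
qed

lemma affine_branch_Fmap:
  assumes j: "j \<in> {1..m}" and i: "i < length (\<sigma> j)"
  shows "affine_branch \<beta> (gpt h m) (Fmap m \<sigma> h \<beta>)
           (breakpoint j i) (breakpoint j (Suc i)) (branch_offset j i)"
  unfolding affine_branch_def
proof
  fix t assume t: "t \<in> {breakpoint j i..<breakpoint j (Suc i)}"
  define k where "k = \<sigma> j ! i"
  define s where "s = \<beta> * (gpt h (j - 1) - t)"
  have k: "k \<in> {1..m}" using letter_in_alphabet[OF j] i unfolding k_def by simp
  have tile_lower: "s + prefix_length j i \<le> 0" and tile_upper: "0 < s + prefix_length j (Suc i)"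
    using t beta_gt unfolding s_def breakpoint_def by (auto simp: field_simps)
  have "breakpoint j 0 \<le> breakpoint j i" "breakpoint j (Suc i) \<le> breakpoint j (length (\<sigma> j))"
    using prefix_length_mono[OF j] i beta_gt unfolding breakpoint_def by (auto simp: divide_right_mono)
  then have "t \<in> Eint h j"
    using t breakpoint_0 breakpoint_full[OF j] unfolding Eint_def by auto
  moreover have "barS \<sigma> h \<beta> (j, gpt h (j - 1) - t) = (k, s + prefix_length j i)"
    using the_patch_tile_containing[OF letter_pos[OF j] i] tile_lower tile_upper
    unfolding barS_def tiling_subst_def k_def prefix_length_def s_def by simp
  ultimately have Fmap_t: "Fmap m \<sigma> h \<beta> t = gpt h (k - 1) - (s + prefix_length j i)"
    using Fmap_eq j k by blast
  have "0 \<le> gpt h (k - 1)" using k by (intro gpt_nonneg) auto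
  moreover have "gpt h k \<le> gpt h m" using k by (intro gpt_mono) auto
  ultimately have "gpt h (k - 1) - (s + prefix_length j i) \<in> {0..<gpt h m}"
    using tile_lower tile_upper prefix_length_Suc[OF i] gpt_diff[of k h] k unfolding k_def by auto
  with Fmap_t show "Fmap m \<sigma> h \<beta> t = \<beta> * t - branch_offset j i \<and>
      \<beta> * t - branch_offset j i \<in> {0..<gpt h m}"
    unfolding branch_offset_def k_def s_def by (auto simp: algebra_simps)
qed

definition branches :: "nat \<Rightarrow> (real \<times> real \<times> real) list" where
  "branches j = map (\<lambda>i. (breakpoint j i, breakpoint j (Suc i), branch_offset j i)) [0..<length (\<sigma> j)]"

definition all_branches :: "(real \<times> real \<times> real) list" where
  "all_branches = concat (map branches [1..<Suc m])"

lemma branch_chain_branches: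
  assumes j: "j \<in> {1..m}"
  shows "branch_chain \<beta> (gpt h m) (Fmap m \<sigma> h \<beta>) (gpt h (j - 1)) (gpt h j) (branches j)"
proof -
  have "branch_chain \<beta> (gpt h m) (Fmap m \<sigma> h \<beta>) (breakpoint j 0) (breakpoint j (length (\<sigma> j)))
          (concat (map (\<lambda>i. [(breakpoint j i, breakpoint j (Suc i), branch_offset j i)]) [0..<length (\<sigma> j)]))"
    by (rule branch_chain_concat) (use affine_branch_Fmap[OF j] breakpoint_less[OF j] in auto)
  then show ?thesis
    unfolding branches_def breakpoint_0 breakpoint_full[OF j] by simp
qed

lemma branch_chain_all_branches: "branch_chain \<beta> (gpt h m) (Fmap m \<sigma> h \<beta>) 0 (gpt h m) all_branches"
  using branch_chain_concat[of 1 "Suc m" \<beta> "gpt h m" "Fmap m \<sigma> h \<beta>" "\<lambda>j. gpt h (j - 1)" branches]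
    branch_chain_branches
  unfolding all_branches_def by (simp add: gpt_def)

lemma all_branches_nonempty: "all_branches \<noteq> []"
proof
  assume "all_branches = []"
  then have "gpt h m = 0" using branch_chain_all_branches by simp
  moreover have m: "m \<in> {1..m}" using subst unfolding is_substitution_def by simp
  then have "0 < gpt h m"
    using gpt_nonneg[of "m - 1"] gpt_diff[of m h] h_pos by fastforce
  ultimately show False by simp
qed

context
  fixes r assumes r: "\<forall>i\<in>{1..m}. h i \<in> rQadj r \<beta>"
begin

lemma gpt_in_rQadj: "k \<le> m \<Longrightarrow> gpt h k \<in> rQadj r \<beta>"
  unfolding gpt_def by (rule rQadj_sum) (use r in auto)

lemma prefix_length_in_rQadj:
  assumes j: "j \<in> {1..m}"
  shows "prefix_length j i \<in> rQadj r \<beta>"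
  unfolding prefix_length_def
proof (rule rQadj_sum_list)
  fix k assume "k \<in> set (take i (\<sigma> j))"
  then have "k \<in> {1..m}" using letter_in_alphabet[OF j] by (blast dest: in_set_takeD)
  then show "h k \<in> rQadj r \<beta>" using r by blast
qed

lemma all_branches_in_rQadj:
  assumes x: "x \<in> set all_branches"
  shows "fst x \<in> rQadj r \<beta>" "snd (snd x) \<in> rQadj r \<beta>"
proof -
  have "\<exists>j\<in>{1..<Suc m}. x \<in> set (branches j)"
    using x unfolding all_branches_def set_concat set_map set_upt by blast
  then obtain j where j: "j \<in> {1..m}" and "x \<in> set (branches j)"
    by (auto simp: atLeastLessThanSuc_atLeastAtMost)
  then obtain i where i: "i < length (\<sigma> j)"
    and x: "x = (breakpoint j i, breakpoint j (Suc i), branch_offset j i)"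
    unfolding branches_def by auto
  have k: "\<sigma> j ! i \<in> {1..m}" using letter_in_alphabet[OF j] i by simp
  show "fst x \<in> rQadj r \<beta>" unfolding x fst_conv breakpoint_def
    by (intro rQadj_add gpt_in_rQadj rQadj_divide_self prefix_length_in_rQadj j) (use j beta_gt in auto)
  show "snd (snd x) \<in> rQadj r \<beta>" unfolding x snd_conv branch_offset_def
    by (intro rQadj_diff rQadj_add rQadj_mult_self gpt_in_rQadj prefix_length_in_rQadj j) (use j k in auto)
qed

lemma algebraic_gen_beta_transf_Fmap: "algebraic_gen_beta_transf \<beta> (gpt h m) (Fmap m \<sigma> h \<beta>)"
proof -
  let ?L = all_branches
  have "\<forall>i\<in>{0..length ?L}. (if i < length ?L then fst (?L ! i) else gpt h m) \<in> rQadj r \<beta>"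
    using all_branches_in_rQadj(1) gpt_in_rQadj by auto
  moreover have "\<forall>j\<in>{1..length ?L}. snd (snd (?L ! (j - 1))) \<in> rQadj r \<beta>"
  proof
    fix j assume "j \<in> {1..length ?L}"
    then have "?L ! (j - 1) \<in> set ?L" by (intro nth_mem) auto
    then show "snd (snd (?L ! (j - 1))) \<in> rQadj r \<beta>" by (rule all_branches_in_rQadj(2))
  qed
  ultimately show ?thesis
    unfolding algebraic_gen_beta_transf_def
    using beta_algebraic gen_beta_transf_pts_of_branch_chain[OF branch_chain_all_branches all_branches_nonempty]
    by blast
qed

end

end

theorem mainTheorem1:
  fixes m :: nat and \<sigma> :: "nat \<Rightarrow> nat list" and \<beta> :: real and h :: "nat \<Rightarrow> real"
  assumes subst: "is_substitution m \<sigma>"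
    and beta_gt: "\<beta> > 1"
    and h_pos: "\<forall>i\<in>{1..m}. h i > 0"
    and eigen: "\<forall>i\<in>{1..m}. (\<Sum>j=1..m. real (struct_matrix \<sigma> i j) * h j) = \<beta> * h i"
    and h_alg: "\<exists>r>0. \<forall>i\<in>{1..m}. h i \<in> rQadj r \<beta>"
  shows "algebraic_gen_beta_transf \<beta> (gpt h m) (Fmap m \<sigma> h \<beta>)"
proof -
  interpret substitution_tiling m \<sigma> \<beta> h
    using subst beta_gt h_pos eigen by unfold_locales
  obtain r where "\<forall>i\<in>{1..m}. h i \<in> rQadj r \<beta>" using h_alg by blast
  then show ?thesis by (rule algebraic_gen_beta_transf_Fmap)
qed

end
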